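(* Let $S_1$ and $S_2$ be disjoint alphabets, let $A_1$ be a set of factorizations on $S_1$ and $A_2$ a set of factorizations on $S_2$, and let $w$ be a weight on $A_1 * A_2$ which is also a weight on $A_1$ and on $A_2$. Then, whenever the Laguerre series involved are well-defined, \[ f_{A_1*A_2,w}(t) = f_{A_1,w}(t)\cdot f_{A_2,w}(t). \]
   Context: A word on an alphabet $S$ is a finite sequence of letters of $S$; a subword is a consecutive block of letters. A factorization on $S$ is an ordered list $(\phi_1)\cdots(\phi_k)$ of nonempty words on $S$ (its parts); $\mathrm{parts}(\phi)=k$. The empty factorization (no parts) is written $\emptyset$. For $T\subseteq S$, the restriction $\phi|_T$ is the factorization whose parts are the maximal subwords of parts of $\phi$ using only letters of $T$, ordered by occurrence in $\phi$ ($\emptyset$ if there are none). For disjoint alphabets $S_1,S_2$ and sets $A_1,A_2$ of factorizations on them, $A_1*A_2$ is the set of factorizations $\phi$ on $S_1\cup S_2$ with $\phi|_{S_1}\in A_1$ and $\phi|_{S_2}\in A_2$. A weight on a set $A$ of factorizations on $S$ is a function $w$ from $A$ and all restrictions of elements of $A$ into a polynomial ring $\mathbb{R}[x_1,x_2,\ldots]$ with $w(\phi)=w(\phi|_T)\,w(\phi|_{S\setminus T})$ for all $\phi\in A$, $T\subseteq S$. The polynomials $l_k(t)$ are defined by $\sum_{k\ge0}l_k(t)x^k=e^{tx/(1+x)}$. The Laguerre series of $A$ with respect to $w$ is $f_{A,w}(t)=\sum_{\phi\in A}w(\phi)\,l_{\mathrm{parts}(\phi)}(t)$, when well-defined as a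 formal power series. *)

theory Defs
  imports "HOL-Library.Poly_Mapping" "HOL-Computational_Algebra.Formal_Power_Series"
begin

(* Words are lists; factorizations are lists of words.
  Polynomials in R[x_1,x_2,...] are finitely supported maps from monomials
  (exponent vectors nat \<Rightarrow>\<^sub>0 nat) to real coefficients. *)

type_synonym 'a factorization = "'a list list"
type_synonym mpoly = "(nat \<Rightarrow>\<^sub>0 nat) \<Rightarrow>\<^sub>0 real"

definition is_factorization :: "'a set \<Rightarrow> 'a factorization \<Rightarrow> bool" where
  "is_factorization S \<phi> \<longleftrightarrow> (\<forall>p\<in>set \<phi>. p \<noteq> [] \<and> set p \<subseteq> S)"

(* Maximal subwords of a word using only letters of T, in order. *)
fun runs :: "'a set \<Rightarrow> 'a list \<Rightarrow> 'a list list" where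
  "runs T [] = []"
| "runs T [x] = (if x \<in> T then [[x]] else [])"
| "runs T (x # y # xs) =
     (if x \<in> T then
        (if y \<in> T then (case runs T (y # xs) of b # bs \<Rightarrow> (x # b) # bs | [] \<Rightarrow> [[x]])
         else [x] # runs T (y # xs))
      else runs T (y # xs))"

definition restrict :: "'a set \<Rightarrow> 'a factorization \<Rightarrow> 'a factorization" where
  "restrict T \<phi> = concat (map (runs T) \<phi>)"

definition parts :: "'a factorization \<Rightarrow> nat" where
  "parts \<phi> = length \<phi>"

definition star :: "'a set \<Rightarrow> 'a set \<Rightarrow> 'a factorization set \<Rightarrow> 'a factorization set
                     \<Rightarrow> 'a factorization set" where
  "star S1 S2 A1 A2 = {\<phi>. is_factorization (S1 \<union> S2) \<phi> \<and>
                         restrict S1 \<phi> \<in> A1 \<and> restrict S2 \<phi> \<in> A2}"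

definition is_weight :: "'a set \<Rightarrow> 'a factorization set \<Rightarrow> ('a factorization \<Rightarrow> mpoly) \<Rightarrow> bool" where
  "is_weight S A w \<longleftrightarrow>
     (\<forall>\<phi>\<in>A. \<forall>T. T \<subseteq> S \<longrightarrow> w \<phi> = w (restrict T \<phi>) * w (restrict (S - T) \<phi>))"

(* Coefficient of t^j in l_k(t), read off from
  e^{tx/(1+x)} = \<Sum>_j t^j (x/(1+x))^j / j!. *)
definition lag_coeff :: "nat \<Rightarrow> nat \<Rightarrow> real" where
  "lag_coeff k j = fps_nth ((fps_X * inverse (1 + fps_X)) ^ j) k / fact j"

(* Formal power series in x_1,x_2,... and t: coefficient function
  (monomial in the x's) \<Rightarrow> (power of t) \<Rightarrow> real. *)
type_synonym series = "(nat \<Rightarrow>\<^sub>0 nat) \<Rightarrow> nat \<Rightarrow> real"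

definition lag_term_coeff :: "('a factorization \<Rightarrow> mpoly) \<Rightarrow> 'a factorization \<Rightarrow> (nat \<Rightarrow>\<^sub>0 nat) \<Rightarrow> nat \<Rightarrow> real" where
  "lag_term_coeff w \<phi> m j = Poly_Mapping.lookup (w \<phi>) m * lag_coeff (parts \<phi>) j"

definition lag_well_defined :: "'a factorization set \<Rightarrow> ('a factorization \<Rightarrow> mpoly) \<Rightarrow> bool" where
  "lag_well_defined A w \<longleftrightarrow>
     (\<forall>m j. finite {\<phi>\<in>A. lag_term_coeff w \<phi> m j \<noteq> 0})"

definition lag_series :: "'a factorization set \<Rightarrow> ('a factorization \<Rightarrow> mpoly) \<Rightarrow> series" where
  "lag_series A w m j = (\<Sum>\<phi>\<in>{\<phi>\<in>A. lag_term_coeff w \<phi> m j \<noteq> 0}. lag_term_coeff w \<phi> m j)"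

definition series_mult :: "series \<Rightarrow> series \<Rightarrow> series" where
  "series_mult f g m j =
     (\<Sum>(a, b)\<in>{(a, b). a + b = m}. \<Sum>i\<le>j. f a i * g b (j - i))"

end

theory Submission
  imports Defs
begin

text \<open>
  Group the factorizations \<open>\<phi>\<close> of \<open>A\<^sub>1 * A\<^sub>2\<close> by the pair of restrictions
  \<open>(\<phi>|\<^sub>S\<^sub>1, \<phi>|\<^sub>S\<^sub>2) = (a, b)\<close>. On such a fibre the weight is
  \<open>w a \<cdot> w b\<close>, so the theorem reduces to the identity
  \<open>\<Sum>\<^sub>\<phi> l\<^bsub>parts \<phi>\<^esub>(t) = l\<^bsub>parts a\<^esub>(t) \<cdot> l\<^bsub>parts b\<^esub>(t)\<close>
  of power series in \<open>t\<close>, the sum ranging over the (finite) fibre. Both sides take the value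
  \<open>[a = b = []]\<close> at \<open>t = 0\<close>, so it suffices to compare derivatives. Splitting the fibre
  according to whether the first letter lies in \<open>S\<^sub>1\<close> or in \<open>S\<^sub>2\<close>, and peeling off the
  first run of letters, the derivatives are compared by induction on \<open>parts a + parts b\<close>;
  besides their values at \<open>t = 0\<close>, the only property of the \<open>l\<^sub>k\<close> needed is \<open>l\<^sub>k\<^sub>+\<^sub>1' + l\<^sub>k' = l\<^sub>k\<close>, which comes from
  \<open>(1 + x) \<cdot> x/(1 + x) = x\<close>.
\<close>

section \<open>Laguerre polynomials as power series in \<open>t\<close>\<close>

definition laguerre :: "nat \<Rightarrow> real fps" where
  "laguerre k = Abs_fps (lag_coeff k)"

lemma laguerre_nth: "fps_nth (laguerre k) j = lag_coeff k j"
  by (simp add: laguerre_def)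

lemma laguerre_nth_0: "fps_nth (laguerre k) 0 = (if k = 0 then 1 else 0)"
  by (simp add: laguerre_nth lag_coeff_def)

lemma laguerre_0 [simp]: "laguerre 0 = 1"
  by (rule fps_ext) (simp add: laguerre_nth lag_coeff_def fps_nth_power_0)

lemma fps_deriv_laguerre_Suc:
  "fps_deriv (laguerre (Suc k)) = laguerre k - fps_deriv (laguerre k)"
proof (rule fps_ext)
  fix j
  define h :: "real fps" where "h = fps_X * inverse (1 + fps_X)"
  have "h ^ Suc j * (1 + fps_X) = fps_X * h ^ j"
    by (simp add: h_def mult_ac power_mult_distrib inverse_mult_eq_1')
  from arg_cong[OF this, of "\<lambda>f. fps_nth f (Suc k)"]
  have "fps_nth (h ^ Suc j) (Suc k) = fps_nth (h ^ j) k - fps_nth (h ^ Suc j) k"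
    by (simp add: algebra_simps)
  then show "fps_nth (fps_deriv (laguerre (Suc k))) j = fps_nth (laguerre k - fps_deriv (laguerre k)) j"
    by (simp add: laguerre_nth lag_coeff_def h_def field_simps del: of_nat_Suc)
qed

section \<open>Runs and restrictions\<close>

lemma runs_Cons_notin: "x \<notin> T \<Longrightarrow> runs T (x # xs) = runs T xs"
  by (cases xs) auto

lemma runs_append_disjoint: "set u \<inter> T = {} \<Longrightarrow> runs T (u @ q) = runs T q"
  by (induction u) (auto simp: runs_Cons_notin)

lemma runs_append_maximal:
  assumes "u \<noteq> []" "set u \<subseteq> T" "q = [] \<or> hd q \<notin> T"
  shows "runs T (u @ q) = u # runs T q"
  using assms
proof (induction u)
  case (Cons x u)
  then show ?case
    by (cases u; cases q) auto
qed simp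

lemma runs_hd_in:
  assumes "p \<noteq> []" "hd p \<in> T"
  shows "runs T p = takeWhile (\<lambda>x. x \<in> T) p # runs T (dropWhile (\<lambda>x. x \<in> T) p)"
proof -
  have "takeWhile (\<lambda>x. x \<in> T) p \<noteq> []"
    using assms by (cases p) auto
  moreover have "set (takeWhile (\<lambda>x. x \<in> T) p) \<subseteq> T"
    by (auto dest: set_takeWhileD)
  ultimately show ?thesis
    using runs_append_maximal[of _ T "dropWhile (\<lambda>x. x \<in> T) p"] hd_dropWhile[of "\<lambda>x. x \<in> T" p]
    by (metis takeWhile_dropWhile_id)
qed

lemma restrict_Nil [simp]: "restrict T [] = []"
  by (simp add: restrict_def)

lemma restrict_Cons [simp]: "restrict T (p # \<phi>) = runs T p @ restrict T \<phi>"
  by (simp add: restrict_def)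

lemma is_factorization_Nil [simp]: "is_factorization S []"
  by (simp add: is_factorization_def)

lemma is_factorization_Cons [simp]:
  "is_factorization S (p # \<phi>) \<longleftrightarrow> p \<noteq> [] \<and> set p \<subseteq> S \<and> is_factorization S \<phi>"
  by (auto simp: is_factorization_def)

section \<open>Fibres of the restriction map\<close>

definition fiber :: "'a set \<Rightarrow> 'a set \<Rightarrow> 'a factorization \<Rightarrow> 'a factorization \<Rightarrow> 'a factorization set" where
  "fiber S T a b = {\<phi>. is_factorization (S \<union> T) \<phi> \<and> restrict S \<phi> = a \<and> restrict T \<phi> = b}"

definition fiber_first_in ::
    "'a set \<Rightarrow> 'a set \<Rightarrow> 'a factorization \<Rightarrow> 'a factorization \<Rightarrow> 'a factorization set" where
  "fiber_first_in S T a b = {\<phi> \<in> fiber S T a b. \<phi> \<noteq> [] \<and> hd (hd \<phi>) \<in> S}"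

lemma fiber_swap: "fiber T S b a = fiber S T a b"
  by (auto simp: fiber_def Un_commute)

lemma fiber_first_in_hd_nonempty: "\<phi> \<in> fiber_first_in S T a b \<Longrightarrow> \<phi> \<noteq> [] \<and> hd \<phi> \<noteq> []"
  by (auto simp: fiber_first_in_def fiber_def neq_Nil_conv)

lemma fiber_eq_Un:
  "fiber S T a b =
     fiber_first_in S T a b \<union> fiber_first_in T S b a \<union> (if a = [] \<and> b = [] then {[]} else {})"
proof (intro equalityI subsetI)
  fix \<phi> assume \<phi>: "\<phi> \<in> fiber S T a b"
  show "\<phi> \<in> fiber_first_in S T a b \<union> fiber_first_in T S b a \<union> (if a = [] \<and> b = [] then {[]} else {})"
  proof (cases \<phi>)
    case Nil
    then show ?thesis using \<phi> by (simp add: fiber_def)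
  next
    case (Cons p \<psi>)
    then have "hd p \<in> S \<or> hd p \<in> T"
      using \<phi> by (cases p) (auto simp: fiber_def)
    then show ?thesis
      using \<phi> Cons fiber_swap[of T S b a] by (auto simp: fiber_first_in_def)
  qed
qed (auto simp: fiber_first_in_def fiber_swap fiber_def split: if_splits)

lemma fiber_first_in_disjoint:
  "S \<inter> T = {} \<Longrightarrow> fiber_first_in S T a b \<inter> fiber_first_in T S b a = {}"
  by (auto simp: fiber_first_in_def)

lemma fiber_first_in_Nil: "fiber_first_in S T [] b = {}"
proof (rule equals0I)
  fix \<phi> assume \<phi>: "\<phi> \<in> fiber_first_in S T [] b"
  then have "runs S (hd \<phi>) \<noteq> []"
    using fiber_first_in_hd_nonempty[OF \<phi>] \<phi> runs_hd_in[of "hd \<phi>" S]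
    by (auto simp: fiber_first_in_def)
  then show False
    using \<phi> fiber_first_in_hd_nonempty[OF \<phi>] by (cases \<phi>) (auto simp: fiber_first_in_def fiber_def)
qed

lemma fiber_first_in_Cons_subset:
  assumes disj: "S \<inter> T = {}"
  shows "fiber_first_in S T (u # us) b \<subseteq>
           (#) u ` fiber S T us b \<union> (\<lambda>\<psi>. (u @ hd \<psi>) # tl \<psi>) ` fiber_first_in T S b us"
proof
  fix \<phi> assume "\<phi> \<in> fiber_first_in S T (u # us) b"
  then obtain p \<psi> where \<phi>: "\<phi> = p # \<psi>" and p: "p \<noteq> []" "hd p \<in> S" "set p \<subseteq> S \<union> T"
    and \<psi>: "is_factorization (S \<union> T) \<psi>"
    and rS: "runs S p @ restrict S \<psi> = u # us" and rT: "runs T p @ restrict T \<psi> = b"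
    by (auto simp: fiber_first_in_def fiber_def neq_Nil_conv)
  define q where "q = dropWhile (\<lambda>x. x \<in> S) p"
  have "runs S p = takeWhile (\<lambda>x. x \<in> S) p # runs S q"
    using runs_hd_in[OF p(1,2)] by (simp add: q_def)
  with rS have u: "takeWhile (\<lambda>x. x \<in> S) p = u" and us: "us = runs S q @ restrict S \<psi>"
    by auto
  have p_eq: "p = u @ q"
    using u takeWhile_dropWhile_id[of "\<lambda>x. x \<in> S" p] by (simp add: q_def)
  have "set u \<subseteq> S"
    unfolding u[symmetric] by (auto dest: set_takeWhileD)
  then have "runs T p = runs T q"
    using p_eq disj runs_append_disjoint[of u T q] by auto
  with rT have b: "b = runs T q @ restrict T \<psi>"
    by simp
  show "\<phi> \<in> (#) u ` fiber S T us b \<union> (\<lambda>\<psi>. (u @ hd \<psi>) # tl \<psi>) ` fiber_first_in T S b us"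
  proof (cases "q = []")
    case True
    then have "\<psi> \<in> fiber S T us b"
      using \<psi> us b by (simp add: fiber_def)
    then show ?thesis
      using \<phi> p_eq True by blast
  next
    case False
    then have "hd q \<notin> S" "set q \<subseteq> S \<union> T"
      using hd_dropWhile[of "\<lambda>x. x \<in> S" p] p(3) by (auto simp: q_def dest: set_dropWhileD)
    moreover from this False have "hd q \<in> T"
      using list.set_sel(1)[of q] by blast
    ultimately have "q # \<psi> \<in> fiber_first_in T S b us"
      using False \<psi> us b by (auto simp: fiber_first_in_def fiber_def Un_commute)
    then show ?thesis
      using \<phi> p_eq by (metis (no_types, lifting) UnI2 image_eqI list.sel(1,3))
  qed
qed

lemma fiber_first_in_Cons_supset:
  assumes disj: "S \<inter> T = {}" and u: "u \<noteq> []" "set u \<subseteq> S"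
  shows "(#) u ` fiber S T us b \<union> (\<lambda>\<psi>. (u @ hd \<psi>) # tl \<psi>) ` fiber_first_in T S b us \<subseteq>
           fiber_first_in S T (u # us) b"
proof -
  have u_out: "runs T (u @ q) = runs T q" for q
    using runs_append_disjoint[of u T q] u disj by auto
  have "u # \<psi> \<in> fiber_first_in S T (u # us) b" if "\<psi> \<in> fiber S T us b" for \<psi>
    using that u u_out[of "[]"] runs_append_maximal[OF u, of "[]"]
    by (cases u) (auto simp: fiber_first_in_def fiber_def)
  moreover have "(u @ q) # \<psi> \<in> fiber_first_in S T (u # us) b"
    if "q # \<psi> \<in> fiber_first_in T S b us" for q \<psi>
  proof -
    have q: "q \<noteq> []" "hd q \<in> T" "set q \<subseteq> S \<union> T"
      using that by (auto simp: fiber_first_in_def fiber_def)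
    then have "runs S (u @ q) = u # runs S q"
      using runs_append_maximal[OF u, of q] disj by auto
    then show ?thesis
      using that u q u_out[of q] by (cases u) (auto simp: fiber_first_in_def fiber_def Un_commute)
  qed
  ultimately show ?thesis
    using fiber_first_in_hd_nonempty[of _ T S b us] by (auto simp del: append_Cons)
qed

lemma fiber_first_in_Cons:
  assumes "S \<inter> T = {}" "u \<noteq> []" "set u \<subseteq> S"
  shows "fiber_first_in S T (u # us) b =
           (#) u ` fiber S T us b \<union> (\<lambda>\<psi>. (u @ hd \<psi>) # tl \<psi>) ` fiber_first_in T S b us"
  using fiber_first_in_Cons_subset[OF assms(1)] fiber_first_in_Cons_supset[OF assms]
  by (rule equalityI)

lemma sum_laguerre_fiber_if_first_in:
  assumes disj: "S \<inter> T = {}"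
    and fin: "finite (fiber_first_in S T a b)" "finite (fiber_first_in T S b a)"
    and sum_S: "(\<Sum>\<phi>\<in>fiber_first_in S T a b. fps_deriv (laguerre (length \<phi>))) =
                  fps_deriv (laguerre (length a)) * laguerre (length b)"
    and sum_T: "(\<Sum>\<phi>\<in>fiber_first_in T S b a. fps_deriv (laguerre (length \<phi>))) =
                  fps_deriv (laguerre (length b)) * laguerre (length a)"
  shows "finite (fiber S T a b)"
    and "(\<Sum>\<phi>\<in>fiber S T a b. laguerre (length \<phi>)) = laguerre (length a) * laguerre (length b)"
proof -
  let ?E = "if a = [] \<and> b = [] then {[]} else {} :: 'a factorization set"
  show "finite (fiber S T a b)"
    using fin by (simp add: fiber_eq_Un)
  have sum_split: "(\<Sum>\<phi>\<in>fiber S T a b. g \<phi>) =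
      (\<Sum>\<phi>\<in>fiber_first_in S T a b. g \<phi>) + (\<Sum>\<phi>\<in>fiber_first_in T S b a. g \<phi>) + (\<Sum>\<phi>\<in>?E. g \<phi>)"
    for g :: "'a factorization \<Rightarrow> real fps"
    unfolding fiber_eq_Un using fin fiber_first_in_disjoint[OF disj]
    by (subst sum.union_disjoint; auto dest: fiber_first_in_hd_nonempty)+
  let ?L = "\<Sum>\<phi>\<in>fiber S T a b. laguerre (length \<phi>)"
  have "fps_deriv ?L = fps_deriv (laguerre (length a) * laguerre (length b))"
    by (simp add: fps_deriv_sum sum_split sum_S sum_T algebra_simps)
  moreover have "fps_nth ?L 0 = fps_nth (laguerre (length a) * laguerre (length b)) 0"
  proof -
    have "(\<Sum>\<phi>\<in>fiber_first_in S T a b. fps_nth (laguerre (length \<phi>)) 0) = 0"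
      "(\<Sum>\<phi>\<in>fiber_first_in T S b a. fps_nth (laguerre (length \<phi>)) 0) = 0"
      by (auto intro!: sum.neutral simp: laguerre_nth_0 dest: fiber_first_in_hd_nonempty)
    then show ?thesis
      by (simp add: fps_sum_nth sum_split laguerre_nth_0)
  qed
  ultimately show "?L = laguerre (length a) * laguerre (length b)"
    by (metis fps_deriv_eq_iff diff_self fps_const_0_eq_0 add_0)
qed

lemma sum_deriv_laguerre_fiber_first_in_Cons:
  assumes disj: "S \<inter> T = {}" and u: "u \<noteq> []" "set u \<subseteq> S"
    and fin: "finite (fiber S T us b)" "finite (fiber_first_in T S b us)"
    and sum_fiber: "(\<Sum>\<phi>\<in>fiber S T us b. laguerre (length \<phi>)) = laguerre (length us) * laguerre (length b)"
    and sum_T: "(\<Sum>\<phi>\<in>fiber_first_in T S b us. fps_deriv (laguerre (length \<phi>))) =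
                  fps_deriv (laguerre (length b)) * laguerre (length us)"
  shows "finite (fiber_first_in S T (u # us) b)"
    and "(\<Sum>\<phi>\<in>fiber_first_in S T (u # us) b. fps_deriv (laguerre (length \<phi>))) =
           fps_deriv (laguerre (Suc (length us))) * laguerre (length b)"
proof -
  let ?g = "\<lambda>\<psi>. (u @ hd \<psi>) # tl \<psi>"
  have split: "fiber_first_in S T (u # us) b = (#) u ` fiber S T us b \<union> ?g ` fiber_first_in T S b us"
    by (rule fiber_first_in_Cons[OF disj u])
  then show "finite (fiber_first_in S T (u # us) b)"
    using fin by simp
  have inj_g: "inj_on ?g (fiber_first_in T S b us)"
  proof (rule inj_onI)
    fix \<psi> \<psi>' assume "\<psi> \<in> fiber_first_in T S b us" "\<psi>' \<in> fiber_first_in T S b us" "?g \<psi> = ?g \<psi>'"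
    then show "\<psi> = \<psi>'"
      using fiber_first_in_hd_nonempty by (metis list.collapse list.inject same_append_eq)
  qed
  have disj_images: "(#) u ` fiber S T us b \<inter> ?g ` fiber_first_in T S b us = {}"
    using fiber_first_in_hd_nonempty by (auto simp del: append_Cons) blast
  have length_g: "length (?g \<psi>) = length \<psi>" if "\<psi> \<in> fiber_first_in T S b us" for \<psi>
    using fiber_first_in_hd_nonempty[OF that] by (cases \<psi>) auto
  have "(\<Sum>\<phi>\<in>fiber_first_in S T (u # us) b. fps_deriv (laguerre (length \<phi>))) =
      (\<Sum>\<psi>\<in>fiber S T us b. fps_deriv (laguerre (Suc (length \<psi>)))) +
      (\<Sum>\<psi>\<in>fiber_first_in T S b us. fps_deriv (laguerre (length \<psi>)))"
    unfolding split using fin disj_images inj_g length_g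
    by (simp add: sum.union_disjoint sum.reindex)
  also have "\<dots> = (\<Sum>\<psi>\<in>fiber S T us b. laguerre (length \<psi>))
      - fps_deriv (\<Sum>\<psi>\<in>fiber S T us b. laguerre (length \<psi>))
      + fps_deriv (laguerre (length b)) * laguerre (length us)"
    by (simp add: fps_deriv_laguerre_Suc sum_subtractf fps_deriv_sum sum_T)
  also have "\<dots> = fps_deriv (laguerre (Suc (length us))) * laguerre (length b)"
    by (simp add: sum_fiber fps_deriv_laguerre_Suc algebra_simps)
  finally show "(\<Sum>\<phi>\<in>fiber_first_in S T (u # us) b. fps_deriv (laguerre (length \<phi>))) =
      fps_deriv (laguerre (Suc (length us))) * laguerre (length b)" .
qed

lemma sum_deriv_laguerre_fiber_first_in:
  assumes "S \<inter> T = {}" "is_factorization S a" "is_factorization T b"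
  shows "finite (fiber_first_in S T a b) \<and>
    (\<Sum>\<phi>\<in>fiber_first_in S T a b. fps_deriv (laguerre (length \<phi>))) =
      fps_deriv (laguerre (length a)) * laguerre (length b)"
  using assms
proof (induction "length a + length b" arbitrary: S T a b rule: less_induct)
  case less
  show ?case
  proof (cases a)
    case Nil
    then show ?thesis
      by (simp add: fiber_first_in_Nil)
  next
    case (Cons u us)
    have disj: "S \<inter> T = {}" "T \<inter> S = {}" and u: "u \<noteq> []" "set u \<subseteq> S"
      and us: "is_factorization S us"
      using less.prems Cons by auto
    have IH_S: "finite (fiber_first_in S T us b) \<and>
        (\<Sum>\<phi>\<in>fiber_first_in S T us b. fps_deriv (laguerre (length \<phi>))) =
          fps_deriv (laguerre (length us)) * laguerre (length b)"
      using less.hyps[of us b] less.prems(3) Cons disj us by simp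
    have IH_T: "finite (fiber_first_in T S b us) \<and>
        (\<Sum>\<phi>\<in>fiber_first_in T S b us. fps_deriv (laguerre (length \<phi>))) =
          fps_deriv (laguerre (length b)) * laguerre (length us)"
      using less.hyps[of b us] less.prems(3) Cons disj us by simp
    then show ?thesis
      using sum_laguerre_fiber_if_first_in[OF disj(1)] IH_S
        sum_deriv_laguerre_fiber_first_in_Cons[OF disj(1) u] Cons
      by simp
  qed
qed

lemma
  assumes "S \<inter> T = {}" "is_factorization S a" "is_factorization T b"
  shows finite_fiber: "finite (fiber S T a b)"
    and sum_laguerre_fiber:
      "(\<Sum>\<phi>\<in>fiber S T a b. laguerre (length \<phi>)) = laguerre (length a) * laguerre (length b)"
  using sum_laguerre_fiber_if_first_in[OF assms(1)] sum_deriv_laguerre_fiber_first_in[OF assms]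
    sum_deriv_laguerre_fiber_first_in[of T S b a] assms
  by (auto simp: Int_commute)

section \<open>Laguerre series\<close>

lemma finite_sum_decompositions:
  fixes m :: "'a \<Rightarrow>\<^sub>0 nat"
  shows "finite {(a, b). a + b = m}"
proof -
  let ?summands = "{a. \<exists>b. a + b = m}" and ?K = "Poly_Mapping.keys m"
  define B :: "nat set" where "B = (\<Union>i\<in>?K. {..Poly_Mapping.lookup m i})"
  let ?F = "{f. \<forall>i. (i \<in> ?K \<longrightarrow> f i \<in> B) \<and> (i \<notin> ?K \<longrightarrow> f i = 0)}"
  have "Poly_Mapping.lookup ` ?summands \<subseteq> ?F"
  proof (rule image_subsetI)
    fix a assume "a \<in> ?summands"
    then obtain b where "a + b = m" by blast
    then have le: "Poly_Mapping.lookup a i \<le> Poly_Mapping.lookup m i" for i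
      by (auto simp: lookup_add)
    show "Poly_Mapping.lookup a \<in> ?F"
    proof (intro CollectI allI conjI impI)
      fix i
      show "i \<in> ?K \<Longrightarrow> Poly_Mapping.lookup a i \<in> B"
        using le[of i] by (auto simp: B_def)
      show "i \<notin> ?K \<Longrightarrow> Poly_Mapping.lookup a i = 0"
        using le[of i] by (simp add: in_keys_iff)
    qed
  qed
  moreover have "finite ?F"
    by (intro finite_set_of_finite_funs) (auto simp: B_def)
  ultimately have "finite (Poly_Mapping.lookup ` ?summands)"
    by (rule finite_subset)
  then have "finite ?summands"
    by (rule finite_imageD) (simp add: inj_on_def)
  moreover have "{(a, b). a + b = m} \<subseteq> ?summands \<times> ?summands"
    using add.commute by blast
  ultimately show ?thesis
    by (simp add: finite_subset)
qed

lemma lookup_times_eq_sum_decompositions: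
  fixes p q :: "('a \<Rightarrow>\<^sub>0 nat) \<Rightarrow>\<^sub>0 'b::comm_semiring_0" and m :: "'a \<Rightarrow>\<^sub>0 nat"
  shows "Poly_Mapping.lookup (p * q) m =
    (\<Sum>(a, b)\<in>{(a, b). a + b = m}. Poly_Mapping.lookup p a * Poly_Mapping.lookup q b)"
proof -
  have "Poly_Mapping.lookup (p * q) m = prod_fun (Poly_Mapping.lookup p) (Poly_Mapping.lookup q) m"
    by (simp add: lookup_mult prod_fun_def)
  also have "\<dots> = (\<Sum>(a, b). Poly_Mapping.lookup p a * Poly_Mapping.lookup q b when m = a + b)"
    by (rule prod_fun_unfold_prod) simp_all
  also have "\<dots> =
      (\<Sum>(a, b)\<in>{(a, b). a + b = m}. Poly_Mapping.lookup p a * Poly_Mapping.lookup q b when m = a + b)"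
    by (rule Sum_any.expand_superset[OF finite_sum_decompositions]) auto
  also have "\<dots> = (\<Sum>(a, b)\<in>{(a, b). a + b = m}. Poly_Mapping.lookup p a * Poly_Mapping.lookup q b)"
    by (rule sum.cong) auto
  finally show ?thesis .
qed

lemma series_mult_lag_term_coeff:
  "series_mult (lag_term_coeff w \<phi>) (lag_term_coeff w \<psi>) m j =
     Poly_Mapping.lookup (w \<phi> * w \<psi>) m * fps_nth (laguerre (parts \<phi>) * laguerre (parts \<psi>)) j"
proof -
  have "series_mult (lag_term_coeff w \<phi>) (lag_term_coeff w \<psi>) m j =
      (\<Sum>(a, b)\<in>{(a, b). a + b = m}. Poly_Mapping.lookup (w \<phi>) a * Poly_Mapping.lookup (w \<psi>) b) *
      (\<Sum>i\<le>j. lag_coeff (parts \<phi>) i * lag_coeff (parts \<psi>) (j - i))"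
    unfolding series_mult_def lag_term_coeff_def sum_product
    by (intro sum.cong) (auto simp: mult_ac)
  then show ?thesis
    by (simp add: lookup_times_eq_sum_decompositions fps_mult_nth laguerre_nth atLeast0AtMost)
qed

lemma series_mult_sum:
  "series_mult (\<lambda>m j. \<Sum>x\<in>X. f x m j) (\<lambda>m j. \<Sum>y\<in>Y. g y m j) m j =
     (\<Sum>x\<in>X. \<Sum>y\<in>Y. series_mult (f x) (g y) m j)"
proof -
  have "series_mult (\<lambda>m j. \<Sum>x\<in>X. f x m j) (\<lambda>m j. \<Sum>y\<in>Y. g y m j) m j =
      (\<Sum>(a, b)\<in>{(a, b). a + b = m}. \<Sum>i\<le>j. \<Sum>x\<in>X. \<Sum>y\<in>Y. f x a i * g y b (j - i))"
    by (simp add: series_mult_def sum_product)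
  also have "\<dots> = (\<Sum>(a, b)\<in>{(a, b). a + b = m}. \<Sum>x\<in>X. \<Sum>y\<in>Y. \<Sum>i\<le>j. f x a i * g y b (j - i))"
    by (intro sum.cong refl) (clarsimp simp: sum.swap[of _ "{..j}"])
  also have "\<dots> = (\<Sum>x\<in>X. \<Sum>y\<in>Y. \<Sum>(a, b)\<in>{(a, b). a + b = m}. \<Sum>i\<le>j. f x a i * g y b (j - i))"
    unfolding split_def by (subst sum.swap, rule sum.cong[OF refl], rule sum.swap)
  finally show ?thesis
    by (simp add: series_mult_def)
qed

lemma series_mult_cong:
  assumes "\<And>a b i. a + b = m \<Longrightarrow> i \<le> j \<Longrightarrow> f a i = f' a i"
    and "\<And>a b i. a + b = m \<Longrightarrow> i \<le> j \<Longrightarrow> g b i = g' b i"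
  shows "series_mult f g m j = series_mult f' g' m j"
  unfolding series_mult_def using assms by (intro sum.cong) auto

lemma lag_series_eq_sum_superset:
  assumes "finite X" "{\<phi>\<in>A. lag_term_coeff w \<phi> m j \<noteq> 0} \<subseteq> X" "X \<subseteq> A"
  shows "lag_series A w m j = (\<Sum>\<phi>\<in>X. lag_term_coeff w \<phi> m j)"
  unfolding lag_series_def using assms by (intro sum.mono_neutral_left) auto

lemma star_subset: "P1 \<subseteq> A1 \<Longrightarrow> P2 \<subseteq> A2 \<Longrightarrow> star S1 S2 P1 P2 \<subseteq> star S1 S2 A1 A2"
  by (auto simp: star_def)

lemma
  assumes disj: "S1 \<inter> S2 = {}"
    and P1: "finite P1" "\<forall>a\<in>P1. is_factorization S1 a"
    and P2: "finite P2" "\<forall>b\<in>P2. is_factorization S2 b"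
    and w: "\<And>\<phi>. \<phi> \<in> star S1 S2 P1 P2 \<Longrightarrow> w \<phi> = w (restrict S1 \<phi>) * w (restrict S2 \<phi>)"
  shows finite_star: "finite (star S1 S2 P1 P2)"
    and sum_star_lag_term_coeff: "(\<Sum>\<phi>\<in>star S1 S2 P1 P2. lag_term_coeff w \<phi> m j) =
      (\<Sum>a\<in>P1. \<Sum>b\<in>P2. series_mult (lag_term_coeff w a) (lag_term_coeff w b) m j)"
proof -
  let ?split = "\<lambda>\<phi>. (restrict S1 \<phi>, restrict S2 \<phi>)"
  have fiber_eq: "{\<phi> \<in> star S1 S2 P1 P2. ?split \<phi> = (a, b)} = fiber S1 S2 a b"
    if "(a, b) \<in> P1 \<times> P2" for a b
    using that by (auto simp: star_def fiber_def)
  have "star S1 S2 P1 P2 = (\<Union>(a, b)\<in>P1 \<times> P2. fiber S1 S2 a b)"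
    by (auto simp: star_def fiber_def)
  then show fin: "finite (star S1 S2 P1 P2)"
    using P1 P2 disj by (auto intro!: finite_fiber)
  have "(\<Sum>\<phi>\<in>star S1 S2 P1 P2. lag_term_coeff w \<phi> m j) =
      (\<Sum>p\<in>P1 \<times> P2. \<Sum>\<phi>\<in>{\<phi> \<in> star S1 S2 P1 P2. ?split \<phi> = p}. lag_term_coeff w \<phi> m j)"
    using fin P1 P2 by (intro sum.group[symmetric]) (auto simp: star_def)
  also have "\<dots> = (\<Sum>(a, b)\<in>P1 \<times> P2. series_mult (lag_term_coeff w a) (lag_term_coeff w b) m j)"
  proof (intro sum.cong refl, clarify)
    fix a b assume ab: "a \<in> P1" "b \<in> P2"
    have "(\<Sum>\<phi>\<in>fiber S1 S2 a b. lag_term_coeff w \<phi> m j) =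
        (\<Sum>\<phi>\<in>fiber S1 S2 a b. Poly_Mapping.lookup (w a * w b) m * fps_nth (laguerre (length \<phi>)) j)"
    proof (intro sum.cong refl)
      fix \<phi> assume "\<phi> \<in> fiber S1 S2 a b"
      then have "\<phi> \<in> star S1 S2 P1 P2" "restrict S1 \<phi> = a" "restrict S2 \<phi> = b"
        using fiber_eq[of a b] ab by blast+
      then have "w \<phi> = w a * w b"
        using w by metis
      then show "lag_term_coeff w \<phi> m j =
          Poly_Mapping.lookup (w a * w b) m * fps_nth (laguerre (length \<phi>)) j"
        by (simp add: lag_term_coeff_def parts_def laguerre_nth)
    qed
    also have "\<dots> = Poly_Mapping.lookup (w a * w b) m * fps_nth (laguerre (length a) * laguerre (length b)) j"
      using sum_laguerre_fiber[OF disj, of a b] ab P1 P2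
      by (simp add: fps_sum_nth[symmetric] sum_distrib_left[symmetric])
    finally show "(\<Sum>\<phi>\<in>{\<phi> \<in> star S1 S2 P1 P2. ?split \<phi> = (a, b)}. lag_term_coeff w \<phi> m j) =
        series_mult (lag_term_coeff w a) (lag_term_coeff w b) m j"
      using fiber_eq[of a b] ab by (simp add: series_mult_lag_term_coeff parts_def)
  qed
  finally show "(\<Sum>\<phi>\<in>star S1 S2 P1 P2. lag_term_coeff w \<phi> m j) =
      (\<Sum>a\<in>P1. \<Sum>b\<in>P2. series_mult (lag_term_coeff w a) (lag_term_coeff w b) m j)"
    by (simp add: sum.cartesian_product)
qed

lemma is_weight_disjoint_Un:
  assumes "is_weight (S1 \<union> S2) A w" "S1 \<inter> S2 = {}" "\<phi> \<in> A"
  shows "w \<phi> = w (restrict S1 \<phi>) * w (restrict S2 \<phi>)"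
proof -
  have "S1 \<union> S2 - S1 = S2"
    using assms(2) by blast
  then show ?thesis
    using assms(1,3) unfolding is_weight_def by (metis Un_upper1)
qed

lemma lag_series_star_eq_sum:
  assumes disj: "S1 \<inter> S2 = {}"
    and A: "\<forall>\<phi>\<in>A1. is_factorization S1 \<phi>" "\<forall>\<phi>\<in>A2. is_factorization S2 \<phi>"
    and weight: "is_weight (S1 \<union> S2) (star S1 S2 A1 A2) w"
    and P: "finite P1" "finite P2" "P1 \<subseteq> A1" "P2 \<subseteq> A2"
    and supp: "restrict S1 ` {\<phi>\<in>star S1 S2 A1 A2. lag_term_coeff w \<phi> m j \<noteq> 0} \<subseteq> P1"
      "restrict S2 ` {\<phi>\<in>star S1 S2 A1 A2. lag_term_coeff w \<phi> m j \<noteq> 0} \<subseteq> P2"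
  shows "lag_series (star S1 S2 A1 A2) w m j =
    (\<Sum>a\<in>P1. \<Sum>b\<in>P2. series_mult (lag_term_coeff w a) (lag_term_coeff w b) m j)"
proof -
  have fact: "\<forall>a\<in>P1. is_factorization S1 a" "\<forall>b\<in>P2. is_factorization S2 b"
    using A P by blast+
  have weight_P: "w \<phi> = w (restrict S1 \<phi>) * w (restrict S2 \<phi>)" if "\<phi> \<in> star S1 S2 P1 P2" for \<phi>
    using is_weight_disjoint_Un[OF weight disj] star_subset[OF P(3,4)] that by blast
  have "{\<phi>\<in>star S1 S2 A1 A2. lag_term_coeff w \<phi> m j \<noteq> 0} \<subseteq> star S1 S2 P1 P2"
    using supp by (auto simp: star_def)
  then have "lag_series (star S1 S2 A1 A2) w m j = (\<Sum>\<phi>\<in>star S1 S2 P1 P2. lag_term_coeff w \<phi> m j)"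
    using finite_star[OF disj P(1) fact(1) P(2) fact(2) weight_P] star_subset[OF P(3,4)]
    by (intro lag_series_eq_sum_superset)
  also have "\<dots> = (\<Sum>a\<in>P1. \<Sum>b\<in>P2. series_mult (lag_term_coeff w a) (lag_term_coeff w b) m j)"
    by (rule sum_star_lag_term_coeff[OF disj P(1) fact(1) P(2) fact(2) weight_P])
  finally show ?thesis .
qed

lemma series_mult_lag_series_eq_sum:
  assumes P: "finite P1" "finite P2" "P1 \<subseteq> A1" "P2 \<subseteq> A2"
    and supp: "\<And>a b i. a + b = m \<Longrightarrow> i \<le> j \<Longrightarrow> {\<phi>\<in>A1. lag_term_coeff w \<phi> a i \<noteq> 0} \<subseteq> P1"
      "\<And>a b i. a + b = m \<Longrightarrow> i \<le> j \<Longrightarrow> {\<phi>\<in>A2. lag_term_coeff w \<phi> b i \<noteq> 0} \<subseteq> P2"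
  shows "series_mult (lag_series A1 w) (lag_series A2 w) m j =
    (\<Sum>a\<in>P1. \<Sum>b\<in>P2. series_mult (lag_term_coeff w a) (lag_term_coeff w b) m j)"
proof -
  have "series_mult (lag_series A1 w) (lag_series A2 w) m j =
      series_mult (\<lambda>a i. \<Sum>\<phi>\<in>P1. lag_term_coeff w \<phi> a i) (\<lambda>b i. \<Sum>\<phi>\<in>P2. lag_term_coeff w \<phi> b i) m j"
    using P supp by (intro series_mult_cong lag_series_eq_sum_superset)
  then show ?thesis
    by (simp add: series_mult_sum)
qed

theorem theorem2p7:
  fixes S1 S2 :: "'a set"
    and A1 A2 :: "'a factorization set"
    and w :: "'a factorization \<Rightarrow> mpoly"
  assumes "S1 \<inter> S2 = {}"
    and "\<forall>\<phi>\<in>A1. is_factorization S1 \<phi>"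
    and "\<forall>\<phi>\<in>A2. is_factorization S2 \<phi>"
    and "is_weight (S1 \<union> S2) (star S1 S2 A1 A2) w"
    and "is_weight S1 A1 w"
    and "is_weight S2 A2 w"
    and "lag_well_defined (star S1 S2 A1 A2) w"
    and "lag_well_defined A1 w"
    and "lag_well_defined A2 w"
  shows "lag_series (star S1 S2 A1 A2) w = series_mult (lag_series A1 w) (lag_series A2 w)"
proof (intro ext)
  fix m :: "nat \<Rightarrow>\<^sub>0 nat" and j :: nat
  define supp where "supp A a i = {\<phi>\<in>A. lag_term_coeff w \<phi> a i \<noteq> 0}"
    for A :: "'a factorization set" and a i
  let ?D = "{(a, b). a + b = m}"
  \<comment> \<open>Finite parts of \<open>A1\<close> and \<open>A2\<close> that suffice to compute the coefficient \<open>(m, j)\<close> of both sides.\<close>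
  define P1 where
    "P1 = restrict S1 ` supp (star S1 S2 A1 A2) m j \<union> (\<Union>(a, b)\<in>?D. \<Union>i\<le>j. supp A1 a i)"
  define P2 where
    "P2 = restrict S2 ` supp (star S1 S2 A1 A2) m j \<union> (\<Union>(a, b)\<in>?D. \<Union>i\<le>j. supp A2 b i)"
  have "finite (supp (star S1 S2 A1 A2) a i)" "finite (supp A1 a i)" "finite (supp A2 a i)" for a i
    using assms(7-9) by (simp_all add: lag_well_defined_def supp_def)
  then have P: "finite P1" "finite P2" "P1 \<subseteq> A1" "P2 \<subseteq> A2"
    using finite_sum_decompositions[of m] by (auto simp: P1_def P2_def supp_def star_def)
  have "lag_series (star S1 S2 A1 A2) w m j =
      (\<Sum>a\<in>P1. \<Sum>b\<in>P2. series_mult (lag_term_coeff w a) (lag_term_coeff w b) m j)"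
    using P by (intro lag_series_star_eq_sum assms(1-4)) (auto simp: P1_def P2_def supp_def)
  also have "\<dots> = series_mult (lag_series A1 w) (lag_series A2 w) m j"
    using P by (intro series_mult_lag_series_eq_sum[symmetric]) (auto simp: P1_def P2_def supp_def)
  finally show "lag_series (star S1 S2 A1 A2) w m j =
      series_mult (lag_series A1 w) (lag_series A2 w) m j" .
qed

end
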